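(* Let $A_1,A_2,A_3$ be three distinct points lying on a gyrocircle with gyrocenter $O$ and gyroradius $R$ in the Einstein gyrovector space $\mathbb{R}^n_s$, $n\ge 2$. Let $\theta=\angle A_1A_3A_2$ be the gyroangle at $A_3$ of gyrotriangle $A_1A_2A_3$ (the inscribed gyroangle), and let $2\phi=\angle A_1OA_2$ be the gyrocentral gyroangle, so that $\theta$ and $2\phi$ subtend the same gyroarc $\widehat{A_1A_2}$. Then $$\sin\theta=\frac{2\gamma_R}{\sqrt{(\gamma_{13}+1)(\gamma_{23}+1)}}\,\sin\phi ,$$ where $\gamma_R=(1-R^2/s^2)^{-1/2}$, $\gamma_{13}=\gamma_{\ominus A_1\oplus A_3}$ and $\gamma_{23}=\gamma_{\ominus A_2\oplus A_3}$.
   Context: Fix $s>0$ and $n\ge2$. The Einstein gyrovector space is the open ball $\mathbb{R}^n_s=\{v\in\mathbb{R}^n:\|v\|<s\}$ with Einstein addition $u\oplus v=\frac{1}{1+u\cdot v/s^2}\{u+\frac{1}{\gamma_u}v+\frac{1}{s^2}\frac{\gamma_u}{1+\gamma_u}(u\cdot v)u\}$, where $\gamma_v=(1-\|v\|^2/s^2)^{-1/2}$ (and for a real $0\le a<s$, $\gamma_a=(1-a^2/s^2)^{-1/2}$); $\ominus v=-v$. The gyrodistance between $A,B$ is $\|\ominus A\oplus B\|$. Gyrolines (resp. gyrosegments, gyrorays) in this model are the intersections of Euclidean lines (resp. are Euclidean segments, rays) with the ball. The gyroangle at vertex $A$ between gyrorays $AB$ and $AC$ is the angle $\alpha\in[0,\pi]$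 with $\cos\alpha=\frac{(\ominus A\oplus B)\cdot(\ominus A\oplus C)}{\|\ominus A\oplus B\|\,\|\ominus A\oplus C\|}$. For a gyrobarycentrically independent triple $\{A_1,A_2,A_3\}$ (i.e. $\ominus A_1\oplus A_2,\ominus A_1\oplus A_3$ linearly independent) its gyroplane is $(A_1\oplus\mathrm{span}\{\ominus A_1\oplus A_2,\ominus A_1\oplus A_3\})\cap\mathbb{R}^n_s$. A gyrocircle with gyrocenter $O$ and gyroradius $r$ is the set of points of a gyroplane containing $O$ at gyrodistance $r$ from $O$. Notation $\gamma_{ij}=\gamma_{\ominus A_i\oplus A_j}$. *)

theory Defs
  imports "HOL-Analysis.Analysis"
begin

text \<open>Einstein gyrovector space of radius s, realised on vectors of type real^'n.\<close>

definition sball :: "real \<Rightarrow> ('a::real_inner) set" where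
  "sball s = {v. norm v < s}"

definition gam :: "real \<Rightarrow> 'a::real_inner \<Rightarrow> real" where
  "gam s v = 1 / sqrt (1 - (norm v)^2 / s^2)"

definition gamr :: "real \<Rightarrow> real \<Rightarrow> real" where
  "gamr s a = 1 / sqrt (1 - a^2 / s^2)"

definition eadd :: "real \<Rightarrow> 'a::real_inner \<Rightarrow> 'a \<Rightarrow> 'a" where
  "eadd s u v = (1 / (1 + (u \<bullet> v) / s^2)) *\<^sub>R
     (u + (1 / gam s u) *\<^sub>R v + ((1 / s^2) * (gam s u / (1 + gam s u)) * (u \<bullet> v)) *\<^sub>R u)"

definition gyrodist :: "real \<Rightarrow> 'a::real_inner \<Rightarrow> 'a \<Rightarrow> real" where
  "gyrodist s A B = norm (eadd s (- A) B)"

definition gyroangle :: "real \<Rightarrow> 'a::real_inner \<Rightarrow> 'a \<Rightarrow> 'a \<Rightarrow> real" where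
  "gyroangle s A B C =
     arccos (((eadd s (- A) B) \<bullet> (eadd s (- A) C)) /
             (norm (eadd s (- A) B) * norm (eadd s (- A) C)))"

definition gyro_bary_indep :: "real \<Rightarrow> 'a::real_inner \<Rightarrow> 'a \<Rightarrow> 'a \<Rightarrow> bool" where
  "gyro_bary_indep s A1 A2 A3 \<longleftrightarrow>
     (\<forall>a b::real. a *\<^sub>R eadd s (- A1) A2 + b *\<^sub>R eadd s (- A1) A3 = 0 \<longrightarrow> a = 0 \<and> b = 0)"

definition gyroplane :: "real \<Rightarrow> 'a::real_inner \<Rightarrow> 'a \<Rightarrow> 'a \<Rightarrow> 'a set" where
  "gyroplane s A1 A2 A3 =
     {eadd s A1 x | x. x \<in> span {eadd s (- A1) A2, eadd s (- A1) A3} \<and> x \<in> sball s} \<inter> sball s"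

text \<open>Gyrocircle with gyrocenter O and gyroradius r in the gyroplane P (P should contain O).\<close>
definition gyrocircle :: "real \<Rightarrow> 'a::real_inner set \<Rightarrow> 'a \<Rightarrow> real \<Rightarrow> 'a set" where
  "gyrocircle s P Oc r = {X \<in> P. gyrodist s Oc X = r}"

end

theory Submission
  imports Defs
begin

text \<open>Write \<open>\<gamma>(X, Y) = \<gamma>\<^bsub>\<ominus>X\<oplus>Y\<^esub> = \<gamma>\<^bsub>X\<^esub>\<gamma>\<^bsub>Y\<^esub>(1 - X\<cdot>Y/s\<^sup>2)\<close>. The gyrocosine law expresses every
  gyroangle through these pair gammas. A gyroplane lies in a Euclidean plane, so \<open>O, A\<^sub>1, A\<^sub>2, A\<^sub>3\<close>
  satisfy an affine relation \<open>\<Sum> m\<^sub>i X\<^sub>i = 0\<close>, \<open>\<Sum> m\<^sub>i = 0\<close>; pairing it with any point \<open>P\<close> gives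
  \<open>\<Sum> (m\<^sub>i/\<gamma>\<^bsub>X\<^sub>i\<^esub>) \<gamma>(X\<^sub>i, P) = 0\<close>, so the matrix \<open>(\<gamma>(X\<^sub>i, X\<^sub>j))\<close> is singular. As \<open>\<gamma>(O, A\<^sub>i) = \<gamma>\<^sub>R\<close>,
  its vanishing determinant is a relation between \<open>\<gamma>\<^sub>1\<^sub>2, \<gamma>\<^sub>1\<^sub>3, \<gamma>\<^sub>2\<^sub>3\<close> and \<open>\<gamma>\<^sub>R\<close>, which turns the
  gyrocosine-law expression for \<open>sin \<theta>\<close> into the claimed multiple of
  \<open>sin \<phi> = sqrt ((1 - cos 2\<phi>)/2)\<close>.\<close>

lemma abs_inner_less_sq:
  fixes a b :: "'a::real_inner"
  assumes "norm a < s" "norm b < s"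
  shows "\<bar>a \<bullet> b\<bar> < s\<^sup>2"
proof -
  have "\<bar>a \<bullet> b\<bar> \<le> norm a * norm b" by (rule Cauchy_Schwarz_ineq2)
  also have "\<dots> < s * s" using assms by (meson le_less_trans mult_strict_mono' norm_ge_zero)
  finally show ?thesis by (simp add: power2_eq_square)
qed

lemma gam_minus: "gam s (- a) = gam s a"
  by (simp add: gam_def)

lemma gam_pos:
  fixes a :: "'a::real_inner"
  assumes "norm a < s"
  shows "gam s a > 0"
proof -
  have s: "s > 0" using assms norm_ge_zero[of a] by linarith
  have "(norm a)\<^sup>2 < s\<^sup>2" using assms by (simp add: power_strict_mono)
  then show ?thesis using s unfolding gam_def by (simp add: field_simps)
qed

lemma gam_sq:
  fixes a :: "'a::real_inner"
  assumes "norm a < s"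
  shows "(gam s a)\<^sup>2 = s\<^sup>2 / (s\<^sup>2 - a \<bullet> a)"
proof -
  have s: "s > 0" using assms norm_ge_zero[of a] by linarith
  have p: "1 - (a \<bullet> a) / s\<^sup>2 > 0"
    using abs_inner_less_sq[OF assms assms] s by (simp add: field_simps)
  have "(gam s a)\<^sup>2 = 1 / (1 - (a \<bullet> a) / s\<^sup>2)"
    unfolding gam_def power2_norm_eq_inner using p by (simp add: power_divide)
  also have "\<dots> = s\<^sup>2 / (s\<^sup>2 - a \<bullet> a)" using s by (simp add: field_simps)
  finally show ?thesis .
qed

text \<open>The paper's \<open>\<gamma>\<^bsub>\<ominus>X\<oplus>Y\<^esub>\<close>, as shown by \<open>gam_eadd_minus\<close>.\<close>
definition gam_pair :: "real \<Rightarrow> 'a::real_inner \<Rightarrow> 'a \<Rightarrow> real" where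
  "gam_pair s X Y = gam s X * gam s Y * (1 - (X \<bullet> Y) / s\<^sup>2)"

lemma gam_pair_commute: "gam_pair s X Y = gam_pair s Y X"
  unfolding gam_pair_def by (simp add: inner_commute)

lemma gam_pair_pos:
  fixes A B :: "'a::real_inner"
  assumes "norm A < s" "norm B < s"
  shows "gam_pair s A B > 0"
proof -
  have s: "s > 0" using assms norm_ge_zero[of A] by linarith
  have "1 - (A \<bullet> B) / s\<^sup>2 > 0" using abs_inner_less_sq[OF assms] s by (simp add: field_simps)
  then show ?thesis unfolding gam_pair_def using gam_pos[OF assms(1)] gam_pos[OF assms(2)] by simp
qed

lemma gam_pair_sq_minus_one:
  fixes A B :: "'a::real_inner"
  assumes a: "norm A < s" and b: "norm B < s"
  shows "(gam_pair s A B)\<^sup>2 - 1 =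
    (gam s A * gam s B / s\<^sup>2)\<^sup>2 * ((s\<^sup>2 - A \<bullet> A) * (norm (B - A))\<^sup>2 + (A \<bullet> (B - A))\<^sup>2)"
proof -
  have s: "s > 0" using a norm_ge_zero[of A] by linarith
  have aa: "s\<^sup>2 - A \<bullet> A > 0" and bb: "s\<^sup>2 - B \<bullet> B > 0"
    using abs_inner_less_sq[OF a a] abs_inner_less_sq[OF b b] by auto
  have "(gam s A * gam s B / s\<^sup>2)\<^sup>2 * ((s\<^sup>2 - A \<bullet> A) * (s\<^sup>2 - B \<bullet> B)) =
      ((gam s A)\<^sup>2 * (s\<^sup>2 - A \<bullet> A)) * ((gam s B)\<^sup>2 * (s\<^sup>2 - B \<bullet> B)) / (s\<^sup>2)\<^sup>2"
    by (simp add: power_mult_distrib power_divide)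
  also have "\<dots> = 1" using aa bb s by (simp add: gam_sq[OF a] gam_sq[OF b])
  finally have one: "1 = (gam s A * gam s B / s\<^sup>2)\<^sup>2 * ((s\<^sup>2 - A \<bullet> A) * (s\<^sup>2 - B \<bullet> B))" ..
  have pair: "(gam_pair s A B)\<^sup>2 = (gam s A * gam s B / s\<^sup>2)\<^sup>2 * (s\<^sup>2 - A \<bullet> B)\<^sup>2"
  proof -
    have "1 - (A \<bullet> B) / s\<^sup>2 = (s\<^sup>2 - A \<bullet> B) / s\<^sup>2" using s by (simp add: field_simps)
    then show ?thesis unfolding gam_pair_def by (simp add: power_mult_distrib power_divide)
  qed
  have lagrange: "(s\<^sup>2 - A \<bullet> B)\<^sup>2 - (s\<^sup>2 - A \<bullet> A) * (s\<^sup>2 - B \<bullet> B) =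
      (s\<^sup>2 - A \<bullet> A) * (norm (B - A))\<^sup>2 + (A \<bullet> (B - A))\<^sup>2"
    unfolding power2_norm_eq_inner
    by (simp add: inner_diff_left inner_diff_right inner_commute power2_eq_square algebra_simps)
  have "(gam_pair s A B)\<^sup>2 - 1 = (gam s A * gam s B / s\<^sup>2)\<^sup>2 * (s\<^sup>2 - A \<bullet> B)\<^sup>2
      - (gam s A * gam s B / s\<^sup>2)\<^sup>2 * ((s\<^sup>2 - A \<bullet> A) * (s\<^sup>2 - B \<bullet> B))"
    using pair one by linarith
  then show ?thesis by (simp add: lagrange[symmetric] right_diff_distrib)
qed

lemma gam_pair_ge_one:
  fixes A B :: "'a::real_inner"
  assumes "norm A < s" "norm B < s"
  shows "gam_pair s A B \<ge> 1"
proof -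
  have "s\<^sup>2 - A \<bullet> A > 0" using abs_inner_less_sq[OF assms(1) assms(1)] by auto
  then have "(gam_pair s A B)\<^sup>2 - 1 \<ge> 0"
    unfolding gam_pair_sq_minus_one[OF assms] by (simp add: mult_nonneg_nonneg)
  then have "(gam_pair s A B)\<^sup>2 \<ge> 1" by simp
  then show ?thesis using gam_pair_pos[OF assms] power2_le_imp_le[of 1 "gam_pair s A B"] by simp
qed

lemma gam_pair_eq_one_iff:
  fixes A B :: "'a::real_inner"
  assumes a: "norm A < s" and b: "norm B < s"
  shows "gam_pair s A B = 1 \<longleftrightarrow> A = B"
proof
  assume "gam_pair s A B = 1"
  then have "(s\<^sup>2 - A \<bullet> A) * (norm (B - A))\<^sup>2 + (A \<bullet> (B - A))\<^sup>2 = 0"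
    using gam_pair_sq_minus_one[OF a b] gam_pos[OF a] gam_pos[OF b] a by auto
  moreover have "(s\<^sup>2 - A \<bullet> A) * (norm (B - A))\<^sup>2 \<ge> 0" "(A \<bullet> (B - A))\<^sup>2 \<ge> 0"
    using abs_inner_less_sq[OF a a] by auto
  ultimately have "(s\<^sup>2 - A \<bullet> A) * (norm (B - A))\<^sup>2 = 0" by linarith
  then show "A = B" using abs_inner_less_sq[OF a a] by auto
next
  assume "A = B"
  then show "gam_pair s A B = 1"
    using gam_pair_sq_minus_one[OF a b] gam_pair_pos[OF a b] by (simp add: power2_eq_1_iff)
qed

lemma gam_pair_self:
  fixes A :: "'a::real_inner"
  shows "norm A < s \<Longrightarrow> gam_pair s A A = 1"
  using gam_pair_eq_one_iff by blast

lemma gam_pair_gt_one: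
  fixes A B :: "'a::real_inner"
  assumes "norm A < s" "norm B < s" "A \<noteq> B"
  shows "gam_pair s A B > 1"
  using gam_pair_ge_one[OF assms(1,2)] gam_pair_eq_one_iff[OF assms(1,2)] assms(3) by linarith

lemma eadd_minus_eq:
  fixes A B :: "'a::real_inner"
  shows "eadd s (- A) B = (1 / (1 - (A \<bullet> B) / s\<^sup>2)) *\<^sub>R
     ((1 / gam s A) *\<^sub>R B - (1 - gam s A / ((1 + gam s A) * s\<^sup>2) * (A \<bullet> B)) *\<^sub>R A)"
  unfolding eadd_def by (simp add: gam_minus algebra_simps)

lemma inner_eadd_minus_bracket:
  fixes g s k ab ac bc :: real
  assumes g: "g \<noteq> 0" and s: "s \<noteq> 0" and k: "k * ((1 + g) * s\<^sup>2) = g"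
  shows "bc / g\<^sup>2 - (1 - k * ac) * ab / g - (1 - k * ab) * ac / g
       + (1 - k * ab) * (1 - k * ac) * (s\<^sup>2 * (g\<^sup>2 - 1) / g\<^sup>2)
     = (s\<^sup>2 - ab) * (s\<^sup>2 - ac) / s\<^sup>2 - (s\<^sup>2 - bc) / g\<^sup>2"
proof -
  have "(bc / g\<^sup>2 - (1 - k * ac) * ab / g - (1 - k * ab) * ac / g
       + (1 - k * ab) * (1 - k * ac) * (s\<^sup>2 * (g\<^sup>2 - 1) / g\<^sup>2))
     - ((s\<^sup>2 - ab) * (s\<^sup>2 - ac) / s\<^sup>2 - (s\<^sup>2 - bc) / g\<^sup>2)
     = (k * ((1 + g) * s\<^sup>2) - g) * ((k * s\<^sup>2 * (g - 1) + g) * ab * ac - s\<^sup>2 * (g - 1) * (ab + ac))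
       / (g\<^sup>2 * s\<^sup>2)"
    using g s by (simp add: field_simps power2_eq_square)
  then show ?thesis using k by simp
qed

lemma inner_eadd_minus:
  fixes A B C :: "'a::real_inner"
  assumes a: "norm A < s" and b: "norm B < s" and c: "norm C < s"
  shows "eadd s (- A) B \<bullet> eadd s (- A) C
       = s\<^sup>2 * (1 - gam_pair s B C / (gam_pair s A B * gam_pair s A C))"
proof -
  define g where "g = gam s A"
  define k where "k = g / ((1 + g) * s\<^sup>2)"
  define p where "p = 1 - (A \<bullet> B) / s\<^sup>2"
  define q where "q = 1 - (A \<bullet> C) / s\<^sup>2"
  have s: "s > 0" using a norm_ge_zero[of A] by linarith
  have g0: "g > 0" unfolding g_def using gam_pos[OF a] .
  have aa: "A \<bullet> A = s\<^sup>2 * (g\<^sup>2 - 1) / g\<^sup>2"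
    using gam_sq[OF a] abs_inner_less_sq[OF a a] g0 s unfolding g_def[symmetric] by (simp add: field_simps)
  have k: "k * ((1 + g) * s\<^sup>2) = g" unfolding k_def using g0 s by simp
  have p: "p = (s\<^sup>2 - A \<bullet> B) / s\<^sup>2" and q: "q = (s\<^sup>2 - A \<bullet> C) / s\<^sup>2"
    unfolding p_def q_def using s by (simp_all add: field_simps)
  have p0: "p > 0" and q0: "q > 0"
    unfolding p q using abs_inner_less_sq[OF a b] abs_inner_less_sq[OF a c] s by auto
  have expand: "\<And>x y mb mc. (x *\<^sub>R ((1 / g) *\<^sub>R B - mb *\<^sub>R A)) \<bullet> (y *\<^sub>R ((1 / g) *\<^sub>R C - mc *\<^sub>R A))
      = x * y * ((B \<bullet> C) / g\<^sup>2 - mc * (A \<bullet> B) / g - mb * (A \<bullet> C) / g + mb * mc * (A \<bullet> A))"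
    by (simp add: inner_diff_left inner_diff_right inner_commute power2_eq_square algebra_simps)
  have "eadd s (- A) B \<bullet> eadd s (- A) C = (1 / p) * (1 / q) * ((B \<bullet> C) / g\<^sup>2
     - (1 - k * (A \<bullet> C)) * (A \<bullet> B) / g - (1 - k * (A \<bullet> B)) * (A \<bullet> C) / g
     + (1 - k * (A \<bullet> B)) * (1 - k * (A \<bullet> C)) * (A \<bullet> A))"
    by (simp only: eadd_minus_eq g_def[symmetric] k_def[symmetric] p_def[symmetric] q_def[symmetric]
        expand)
  also have "\<dots> = (1 / p) * (1 / q) * (s\<^sup>2 * p * q - (s\<^sup>2 - B \<bullet> C) / g\<^sup>2)"
  proof -
    have "s\<^sup>2 * p * q = (s\<^sup>2 - A \<bullet> B) * (s\<^sup>2 - A \<bullet> C) / s\<^sup>2"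
      unfolding p q using s by (simp add: power2_eq_square)
    then show ?thesis
      unfolding aa using inner_eadd_minus_bracket[OF _ _ k] g0 s by simp
  qed
  also have "\<dots> = s\<^sup>2 * (1 - gam_pair s B C / (gam_pair s A B * gam_pair s A C))"
    using p0 q0 g0 s gam_pos[OF b] gam_pos[OF c]
    unfolding gam_pair_def g_def[symmetric] p_def[symmetric] q_def[symmetric]
    by (simp add: field_simps power2_eq_square)
  finally show ?thesis .
qed

lemma norm_eadd_minus_sq:
  fixes A B :: "'a::real_inner"
  assumes "norm A < s" "norm B < s"
  shows "(norm (eadd s (- A) B))\<^sup>2 = s\<^sup>2 * (1 - 1 / (gam_pair s A B)\<^sup>2)"
proof -
  have "(norm (eadd s (- A) B))\<^sup>2 = s\<^sup>2 * (1 - gam_pair s B B / (gam_pair s A B * gam_pair s A B))"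
    unfolding power2_norm_eq_inner by (rule inner_eadd_minus[OF assms(1,2,2)])
  then show ?thesis using gam_pair_self[OF assms(2)] by (simp add: power2_eq_square)
qed

lemma norm_eadd_minus:
  fixes A B :: "'a::real_inner"
  assumes a: "norm A < s" and b: "norm B < s"
  shows "norm (eadd s (- A) B) = s * sqrt ((gam_pair s A B)\<^sup>2 - 1) / gam_pair s A B"
proof -
  have s: "s > 0" using a norm_ge_zero[of A] by linarith
  have G: "gam_pair s A B > 0" by (rule gam_pair_pos[OF a b])
  have "norm (eadd s (- A) B) = sqrt ((norm (eadd s (- A) B))\<^sup>2)" by simp
  also have "\<dots> = sqrt (s\<^sup>2 * (((gam_pair s A B)\<^sup>2 - 1) / (gam_pair s A B)\<^sup>2))"
    unfolding norm_eadd_minus_sq[OF a b] using G by (simp add: diff_divide_distrib)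
  also have "\<dots> = s * sqrt ((gam_pair s A B)\<^sup>2 - 1) / gam_pair s A B"
    using s G by (simp add: real_sqrt_mult real_sqrt_divide)
  finally show ?thesis .
qed

lemma gam_eadd_minus:
  fixes A B :: "'a::real_inner"
  assumes a: "norm A < s" and b: "norm B < s"
  shows "gam s (eadd s (- A) B) = gam_pair s A B"
proof -
  have s: "s > 0" using a norm_ge_zero[of A] by linarith
  have "1 - (norm (eadd s (- A) B))\<^sup>2 / s\<^sup>2 = (1 / gam_pair s A B)\<^sup>2"
    unfolding norm_eadd_minus_sq[OF a b] using s by (simp add: power_divide)
  then show ?thesis unfolding gam_def using gam_pair_pos[OF a b] by simp
qed

lemma abs_inner_div_norms_le_one:
  fixes u v :: "'a::real_inner"
  shows "\<bar>(u \<bullet> v) / (norm u * norm v)\<bar> \<le> 1"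
proof (cases "norm u * norm v = 0")
  case True
  then show ?thesis by (simp only: True div_by_0 abs_zero zero_le_one)
next
  case False
  then have "norm u * norm v > 0" by (simp add: order_le_neq_trans)
  then show ?thesis using Cauchy_Schwarz_ineq2[of u v] by (simp add: abs_divide divide_le_eq_1)
qed

lemma gyroangle_bounds: "0 \<le> gyroangle s A B C" "gyroangle s A B C \<le> pi"
  using abs_inner_div_norms_le_one[of "eadd s (- A) B" "eadd s (- A) C"]
  unfolding gyroangle_def abs_le_iff by (auto intro: arccos_lbound arccos_ubound)

lemma sin_gyroangle: "sin (gyroangle s A B C) = sqrt (1 - (cos (gyroangle s A B C))\<^sup>2)"
  using gyroangle_bounds by (intro sin_cos_sqrt sin_ge_zero)

lemma cos_gyroangle:
  fixes A B C :: "'a::real_inner"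
  assumes a: "norm A < s" and b: "norm B < s" and c: "norm C < s"
    and "A \<noteq> B" "A \<noteq> C"
  shows "cos (gyroangle s A B C) = (gam_pair s A B * gam_pair s A C - gam_pair s B C)
     / (sqrt ((gam_pair s A B)\<^sup>2 - 1) * sqrt ((gam_pair s A C)\<^sup>2 - 1))"
proof -
  have s: "s > 0" using a norm_ge_zero[of A] by linarith
  have "gam_pair s A B > 1" "gam_pair s A C > 1"
    using gam_pair_gt_one assms by auto
  then have pos: "sqrt ((gam_pair s A B)\<^sup>2 - 1) > 0" "sqrt ((gam_pair s A C)\<^sup>2 - 1) > 0"
    by (simp_all add: one_less_power)
  have "cos (gyroangle s A B C) = (eadd s (- A) B \<bullet> eadd s (- A) C)
      / (norm (eadd s (- A) B) * norm (eadd s (- A) C))"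
    unfolding gyroangle_def by (rule cos_arccos_abs[OF abs_inner_div_norms_le_one])
  also have "\<dots> = (gam_pair s A B * gam_pair s A C - gam_pair s B C)
     / (sqrt ((gam_pair s A B)\<^sup>2 - 1) * sqrt ((gam_pair s A C)\<^sup>2 - 1))"
    unfolding inner_eadd_minus[OF a b c] norm_eadd_minus[OF a b] norm_eadd_minus[OF a c]
    using s pos gam_pair_pos[OF a b] gam_pair_pos[OF a c]
    by (simp add: field_simps power2_eq_square)
  finally show ?thesis .
qed

lemma sin_half_eq_sqrt:
  assumes "0 \<le> t" "t \<le> pi"
  shows "sin (t / 2) = sqrt ((1 - cos t) / 2)"
proof -
  have "(1 - cos t) / 2 = (sin (t / 2))\<^sup>2" using cos_double_sin[of "t / 2"] by simp
  moreover have "sin (t / 2) \<ge> 0" using assms by (intro sin_ge_zero) auto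
  ultimately show ?thesis by simp
qed

lemma gyroplane_subset_sball: "gyroplane s B1 B2 B3 \<subseteq> sball s"
  unfolding gyroplane_def by auto

text \<open>\<open>B\<^sub>1 \<oplus> x\<close> is an affine function of \<open>x\<close> divided by the positive affine factor
  \<open>1 + B\<^sub>1\<cdot>x/s\<^sup>2\<close>.\<close>
lemma gyroplane_projective_param:
  fixes B1 B2 B3 :: "'a::real_inner"
  assumes b1: "norm B1 < s"
  obtains e1 e2 F1 F2 where "\<And>X. X \<in> gyroplane s B1 B2 B3 \<Longrightarrow>
    \<exists>\<alpha> \<beta>. 1 + \<alpha> * e1 + \<beta> * e2 > 0 \<and> (1 + \<alpha> * e1 + \<beta> * e2) *\<^sub>R X = B1 + \<alpha> *\<^sub>R F1 + \<beta> *\<^sub>R F2"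
proof
  define v1 where "v1 = eadd s (- B1) B2"
  define v2 where "v2 = eadd s (- B1) B3"
  define k where "k = gam s B1 / ((1 + gam s B1) * s\<^sup>2)"
  fix X assume "X \<in> gyroplane s B1 B2 B3"
  then obtain x where X: "X = eadd s B1 x" and x: "x \<in> span {v1, v2}" "norm x < s"
    unfolding gyroplane_def sball_def v1_def v2_def by auto
  obtain \<alpha> \<beta> where x_eq: "x = \<alpha> *\<^sub>R v1 + \<beta> *\<^sub>R v2"
    using x(1) by (auto simp: span_insert span_singleton) (metis add.commute diff_add_cancel)
  define t where "t = 1 + (B1 \<bullet> x) / s\<^sup>2"
  have s: "s > 0" using b1 norm_ge_zero[of B1] by linarith
  have t_pos: "t > 0" unfolding t_def using abs_inner_less_sq[OF b1 x(2)] s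
    by (simp add: field_simps abs_less_iff)
  have "t *\<^sub>R X = B1 + (1 / gam s B1) *\<^sub>R x + (k * (B1 \<bullet> x)) *\<^sub>R B1"
    using t_pos unfolding X eadd_def t_def k_def by simp
  then show "\<exists>\<alpha> \<beta>. 1 + \<alpha> * ((B1 \<bullet> v1) / s\<^sup>2) + \<beta> * ((B1 \<bullet> v2) / s\<^sup>2) > 0 \<and>
      (1 + \<alpha> * ((B1 \<bullet> v1) / s\<^sup>2) + \<beta> * ((B1 \<bullet> v2) / s\<^sup>2)) *\<^sub>R X
      = B1 + \<alpha> *\<^sub>R ((1 / gam s B1) *\<^sub>R v1 + (k * (B1 \<bullet> v1)) *\<^sub>R B1)
           + \<beta> *\<^sub>R ((1 / gam s B1) *\<^sub>R v2 + (k * (B1 \<bullet> v2)) *\<^sub>R B1)"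
    using t_pos unfolding t_def x_eq
    by (intro exI[of _ \<alpha>] exI[of _ \<beta>]) (simp add: inner_add_right add_divide_distrib algebra_simps)
qed

lemma distinct4_linearly_dependent:
  fixes p0 p1 p2 p3 :: "'a::euclidean_space"
  assumes "DIM('a) \<le> 3" and d: "distinct [p0, p1, p2, p3]"
  obtains l0 l1 l2 l3 where "l0 \<noteq> 0 \<or> l1 \<noteq> 0 \<or> l2 \<noteq> 0 \<or> l3 \<noteq> 0"
    "l0 *\<^sub>R p0 + l1 *\<^sub>R p1 + l2 *\<^sub>R p2 + l3 *\<^sub>R p3 = 0"
proof -
  let ?S = "set [p0, p1, p2, p3]"
  have "dependent ?S"
    using assms distinct_card[OF d] by (intro dependent_biggerset) simp
  then obtain u where u: "\<exists>v\<in>?S. u v \<noteq> 0" "(\<Sum>v\<in>?S. u v *\<^sub>R v) = 0"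
    using dependent_finite[of ?S] by auto
  have "(\<Sum>v\<in>?S. u v *\<^sub>R v) = u p0 *\<^sub>R p0 + u p1 *\<^sub>R p1 + u p2 *\<^sub>R p2 + u p3 *\<^sub>R p3"
    using sum.distinct_set_conv_list[OF d, of "\<lambda>v. u v *\<^sub>R v"] by (simp add: add.assoc)
  then show ?thesis using u that[of "u p0" "u p1" "u p2" "u p3"] by auto
qed

lemma gyroplane_affine_dependent4:
  fixes B1 B2 B3 Q0 Q1 Q2 Q3 :: "'a::real_inner"
  assumes b1: "norm B1 < s"
    and Q: "Q0 \<in> gyroplane s B1 B2 B3" "Q1 \<in> gyroplane s B1 B2 B3"
           "Q2 \<in> gyroplane s B1 B2 B3" "Q3 \<in> gyroplane s B1 B2 B3"
    and d: "distinct [Q0, Q1, Q2, Q3]"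
  obtains m0 m1 m2 m3 where "m0 \<noteq> 0 \<or> m1 \<noteq> 0 \<or> m2 \<noteq> 0 \<or> m3 \<noteq> 0" "m0 + m1 + m2 + m3 = 0"
    "m0 *\<^sub>R Q0 + m1 *\<^sub>R Q1 + m2 *\<^sub>R Q2 + m3 *\<^sub>R Q3 = 0"
proof -
  obtain e1 e2 F1 F2 where P: "\<And>X. X \<in> gyroplane s B1 B2 B3 \<Longrightarrow> \<exists>\<alpha> \<beta>. 1 + \<alpha> * e1 + \<beta> * e2 > 0
      \<and> (1 + \<alpha> * e1 + \<beta> * e2) *\<^sub>R X = B1 + \<alpha> *\<^sub>R F1 + \<beta> *\<^sub>R F2"
    using gyroplane_projective_param[OF b1] by blast
  define t where "t = (\<lambda>\<alpha> \<beta>. 1 + \<alpha> * e1 + \<beta> * e2)"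
  obtain a0 b0 a1 b1' a2 b2 a3 b3 where
    pos: "t a0 b0 > 0" "t a1 b1' > 0" "t a2 b2 > 0" "t a3 b3 > 0" and
    eq: "t a0 b0 *\<^sub>R Q0 = B1 + a0 *\<^sub>R F1 + b0 *\<^sub>R F2" "t a1 b1' *\<^sub>R Q1 = B1 + a1 *\<^sub>R F1 + b1' *\<^sub>R F2"
        "t a2 b2 *\<^sub>R Q2 = B1 + a2 *\<^sub>R F1 + b2 *\<^sub>R F2" "t a3 b3 *\<^sub>R Q3 = B1 + a3 *\<^sub>R F1 + b3 *\<^sub>R F2"
    using P[OF Q(1)] P[OF Q(2)] P[OF Q(3)] P[OF Q(4)] unfolding t_def by metis
  have coords: "distinct [(1::real, a0, b0), (1, a1, b1'), (1, a2, b2), (1, a3, b3)]"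
    using d pos eq by auto (metis order_less_irrefl scaleR_cancel_left)+
  obtain l0 l1 l2 l3 where l: "l0 \<noteq> 0 \<or> l1 \<noteq> 0 \<or> l2 \<noteq> 0 \<or> l3 \<noteq> 0"
    "l0 *\<^sub>R (1::real, a0, b0) + l1 *\<^sub>R (1, a1, b1') + l2 *\<^sub>R (1, a2, b2) + l3 *\<^sub>R (1, a3, b3) = 0"
    by (rule distinct4_linearly_dependent[OF _ coords]) auto
  have l1: "l0 + l1 + l2 + l3 = 0" and la: "l0 * a0 + l1 * a1 + l2 * a2 + l3 * a3 = 0"
    and lb: "l0 * b0 + l1 * b1' + l2 * b2 + l3 * b3 = 0"
    using l(2) by (simp_all add: prod_eq_iff)
  show ?thesis
  proof
    show "l0 * t a0 b0 \<noteq> 0 \<or> l1 * t a1 b1' \<noteq> 0 \<or> l2 * t a2 b2 \<noteq> 0 \<or> l3 * t a3 b3 \<noteq> 0"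
      using l(1) pos by auto
    have "l0 * t a0 b0 + l1 * t a1 b1' + l2 * t a2 b2 + l3 * t a3 b3
      = (l0 + l1 + l2 + l3) + (l0 * a0 + l1 * a1 + l2 * a2 + l3 * a3) * e1
        + (l0 * b0 + l1 * b1' + l2 * b2 + l3 * b3) * e2"
      unfolding t_def by (simp add: algebra_simps)
    then show "l0 * t a0 b0 + l1 * t a1 b1' + l2 * t a2 b2 + l3 * t a3 b3 = 0"
      using l1 la lb by simp
    have "(l0 * t a0 b0) *\<^sub>R Q0 + (l1 * t a1 b1') *\<^sub>R Q1 + (l2 * t a2 b2) *\<^sub>R Q2 + (l3 * t a3 b3) *\<^sub>R Q3
      = (l0 + l1 + l2 + l3) *\<^sub>R B1 + (l0 * a0 + l1 * a1 + l2 * a2 + l3 * a3) *\<^sub>R F1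
        + (l0 * b0 + l1 * b1' + l2 * b2 + l3 * b3) *\<^sub>R F2"
      by (simp add: eq flip: scaleR_scaleR) (simp add: algebra_simps)
    then show "(l0 * t a0 b0) *\<^sub>R Q0 + (l1 * t a1 b1') *\<^sub>R Q1 + (l2 * t a2 b2) *\<^sub>R Q2
        + (l3 * t a3 b3) *\<^sub>R Q3 = 0"
      using l1 la lb by simp
  qed
qed

lemma gam_pair_affine_relation:
  fixes P Q0 Q1 Q2 Q3 :: "'a::real_inner"
  assumes "norm P < s" "norm Q0 < s" "norm Q1 < s" "norm Q2 < s" "norm Q3 < s"
    and sum: "m0 + m1 + m2 + m3 = 0"
    and comb: "m0 *\<^sub>R Q0 + m1 *\<^sub>R Q1 + m2 *\<^sub>R Q2 + m3 *\<^sub>R Q3 = 0"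
  shows "m0 / gam s Q0 * gam_pair s Q0 P + m1 / gam s Q1 * gam_pair s Q1 P
       + m2 / gam s Q2 * gam_pair s Q2 P + m3 / gam s Q3 * gam_pair s Q3 P = 0"
proof -
  have "s > 0" using assms(1) norm_ge_zero[of P] by linarith
  moreover have "gam s Q0 \<noteq> 0" "gam s Q1 \<noteq> 0" "gam s Q2 \<noteq> 0" "gam s Q3 \<noteq> 0"
    using gam_pos assms(2-5) by (metis less_irrefl)+
  ultimately have "m0 / gam s Q0 * gam_pair s Q0 P + m1 / gam s Q1 * gam_pair s Q1 P
       + m2 / gam s Q2 * gam_pair s Q2 P + m3 / gam s Q3 * gam_pair s Q3 P
     = gam s P * ((m0 + m1 + m2 + m3)
         - (m0 * (Q0 \<bullet> P) + m1 * (Q1 \<bullet> P) + m2 * (Q2 \<bullet> P) + m3 * (Q3 \<bullet> P)) / s\<^sup>2)"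
    unfolding gam_pair_def by (simp add: field_simps)
  moreover have "m0 * (Q0 \<bullet> P) + m1 * (Q1 \<bullet> P) + m2 * (Q2 \<bullet> P) + m3 * (Q3 \<bullet> P) = 0"
    using arg_cong[OF comb, of "\<lambda>v. v \<bullet> P"] by (simp add: inner_add_left)
  ultimately show ?thesis using sum by simp
qed

lemma det3_sym_eq_0_of_kernel:
  fixes n11 n12 n13 n22 n23 n33 x y z :: real
  assumes e1: "n11 * x + n12 * y + n13 * z = 0" and e2: "n12 * x + n22 * y + n23 * z = 0"
    and e3: "n13 * x + n23 * y + n33 * z = 0" and nz: "x \<noteq> 0 \<or> y \<noteq> 0 \<or> z \<noteq> 0"
  shows "n11 * (n22 * n33 - n23 * n23) - n12 * (n12 * n33 - n23 * n13) + n13 * (n12 * n23 - n22 * n13) = 0"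
proof -
  define D where "D = n11 * (n22 * n33 - n23 * n23) - n12 * (n12 * n33 - n23 * n13)
    + n13 * (n12 * n23 - n22 * n13)"
  have "D * x = (n22 * n33 - n23 * n23) * (n11 * x + n12 * y + n13 * z)
      + (n13 * n23 - n12 * n33) * (n12 * x + n22 * y + n23 * z)
      + (n12 * n23 - n13 * n22) * (n13 * x + n23 * y + n33 * z)"
    "D * y = (n13 * n23 - n12 * n33) * (n11 * x + n12 * y + n13 * z)
      + (n11 * n33 - n13 * n13) * (n12 * x + n22 * y + n23 * z)
      + (n12 * n13 - n11 * n23) * (n13 * x + n23 * y + n33 * z)"
    "D * z = (n12 * n23 - n13 * n22) * (n11 * x + n12 * y + n13 * z)
      + (n12 * n13 - n11 * n23) * (n12 * x + n22 * y + n23 * z)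
      + (n11 * n22 - n12 * n12) * (n13 * x + n23 * y + n33 * z)"
    unfolding D_def by algebra+
  then have "D * x = 0" "D * y = 0" "D * z = 0" using e1 e2 e3 by simp_all
  then show ?thesis using nz unfolding D_def[symmetric] by auto
qed

text \<open>The hypotheses say that \<open>(w\<^sub>0, \<dots>, w\<^sub>3)\<close> is a kernel vector of the matrix \<open>(\<gamma>(X\<^sub>i, X\<^sub>j))\<close>
  for \<open>X = (O, A\<^sub>1, A\<^sub>2, A\<^sub>3)\<close> with \<open>\<gamma>(O, A\<^sub>i) = c\<close>.\<close>
lemma gram_singular_concyclic_relation:
  fixes a b c d w0 w1 w2 w3 :: real
  assumes E0: "w0 + c * w1 + c * w2 + c * w3 = 0"
    and E1: "c * w0 + w1 + d * w2 + b * w3 = 0"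
    and E2: "c * w0 + d * w1 + w2 + a * w3 = 0"
    and E3: "c * w0 + b * w1 + a * w2 + w3 = 0"
    and nz: "w0 \<noteq> 0 \<or> w1 \<noteq> 0 \<or> w2 \<noteq> 0 \<or> w3 \<noteq> 0"
  shows "(1 - a\<^sup>2 - b\<^sup>2 - d\<^sup>2 + 2 * a * b * d) * (c\<^sup>2 - 1) = 2 * c\<^sup>2 * (a - 1) * (b - 1) * (d - 1)"
proof -
  have w0: "w0 = - c * (w1 + w2 + w3)" using E0 by (simp add: algebra_simps)
  have "(1 - c\<^sup>2) * w1 + (d - c\<^sup>2) * w2 + (b - c\<^sup>2) * w3 = 0"
    "(d - c\<^sup>2) * w1 + (1 - c\<^sup>2) * w2 + (a - c\<^sup>2) * w3 = 0"
    "(b - c\<^sup>2) * w1 + (a - c\<^sup>2) * w2 + (1 - c\<^sup>2) * w3 = 0"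
    using E1 E2 E3 unfolding w0 by (simp_all add: algebra_simps power2_eq_square)
  moreover have "w1 \<noteq> 0 \<or> w2 \<noteq> 0 \<or> w3 \<noteq> 0" using nz w0 by auto
  ultimately have "(1 - c\<^sup>2) * ((1 - c\<^sup>2) * (1 - c\<^sup>2) - (a - c\<^sup>2) * (a - c\<^sup>2))
      - (d - c\<^sup>2) * ((d - c\<^sup>2) * (1 - c\<^sup>2) - (a - c\<^sup>2) * (b - c\<^sup>2))
      + (b - c\<^sup>2) * ((d - c\<^sup>2) * (a - c\<^sup>2) - (1 - c\<^sup>2) * (b - c\<^sup>2)) = 0"
    by (rule det3_sym_eq_0_of_kernel)
  moreover have "(1 - c\<^sup>2) * ((1 - c\<^sup>2) * (1 - c\<^sup>2) - (a - c\<^sup>2) * (a - c\<^sup>2))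
      - (d - c\<^sup>2) * ((d - c\<^sup>2) * (1 - c\<^sup>2) - (a - c\<^sup>2) * (b - c\<^sup>2))
      + (b - c\<^sup>2) * ((d - c\<^sup>2) * (a - c\<^sup>2) - (1 - c\<^sup>2) * (b - c\<^sup>2))
     = 2 * c\<^sup>2 * (a - 1) * (b - 1) * (d - 1) - (1 - a\<^sup>2 - b\<^sup>2 - d\<^sup>2 + 2 * a * b * d) * (c\<^sup>2 - 1)"
    by algebra
  ultimately show ?thesis by simp
qed

lemma gam_eq_gamr_norm: "gam s v = gamr s (norm v)"
  unfolding gam_def gamr_def ..

lemma gam_pair_equidistant_gt_one:
  fixes Oc A B :: "'a::real_inner"
  assumes "norm Oc < s" "norm A < s" "norm B < s"
    and "gam_pair s Oc A = gam_pair s Oc B" "A \<noteq> B"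
  shows "gam_pair s Oc A > 1"
proof -
  have "Oc \<noteq> A"
    using assms gam_pair_eq_one_iff[of Oc s A] gam_pair_eq_one_iff[of Oc s B] by auto
  then show ?thesis using gam_pair_gt_one assms(1,2) by blast
qed

lemma gyroplane_concyclic_relation:
  fixes Oc A1 A2 A3 B1 B2 B3 :: "'a::real_inner"
  assumes b1: "norm B1 < s"
    and P: "Oc \<in> gyroplane s B1 B2 B3" "A1 \<in> gyroplane s B1 B2 B3"
      "A2 \<in> gyroplane s B1 B2 B3" "A3 \<in> gyroplane s B1 B2 B3"
    and c: "gam_pair s Oc A1 = c" "gam_pair s Oc A2 = c" "gam_pair s Oc A3 = c"
    and a: "gam_pair s A2 A3 = a" and b: "gam_pair s A1 A3 = b" and d: "gam_pair s A1 A2 = d"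
    and ne: "A1 \<noteq> A2" "A1 \<noteq> A3" "A2 \<noteq> A3"
  shows "(1 - a\<^sup>2 - b\<^sup>2 - d\<^sup>2 + 2 * a * b * d) * (c\<^sup>2 - 1) = 2 * c\<^sup>2 * (a - 1) * (b - 1) * (d - 1)"
proof -
  have n: "norm Oc < s" "norm A1 < s" "norm A2 < s" "norm A3 < s"
    using P gyroplane_subset_sball unfolding sball_def by blast+
  have "c > 1" using gam_pair_equidistant_gt_one[OF n(1-3)] c ne by simp
  then have "distinct [Oc, A1, A2, A3]"
    using c ne gam_pair_self[OF n(2)] gam_pair_self[OF n(3)] gam_pair_self[OF n(4)] by auto
  then obtain m0 m1 m2 m3 where m: "m0 \<noteq> 0 \<or> m1 \<noteq> 0 \<or> m2 \<noteq> 0 \<or> m3 \<noteq> 0" "m0 + m1 + m2 + m3 = 0"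
      "m0 *\<^sub>R Oc + m1 *\<^sub>R A1 + m2 *\<^sub>R A2 + m3 *\<^sub>R A3 = 0"
    by (rule gyroplane_affine_dependent4[OF b1 P])
  define w0 w1 w2 w3 where "w0 = m0 / gam s Oc" "w1 = m1 / gam s A1"
    "w2 = m2 / gam s A2" "w3 = m3 / gam s A3"
  have "w0 \<noteq> 0 \<or> w1 \<noteq> 0 \<or> w2 \<noteq> 0 \<or> w3 \<noteq> 0"
    using m(1) gam_pos n unfolding w0_w1_w2_w3_def by (metis divide_eq_0_iff less_irrefl)
  moreover note rel = gam_pair_affine_relation[OF _ n m(2,3), folded w0_w1_w2_w3_def]
  have sym: "gam_pair s A1 Oc = c" "gam_pair s A2 Oc = c" "gam_pair s A3 Oc = c"
      "gam_pair s A2 A1 = d" "gam_pair s A3 A1 = b" "gam_pair s A3 A2 = a"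
    using c a b d by (simp_all add: gam_pair_commute)
  have "w0 + c * w1 + c * w2 + c * w3 = 0" "c * w0 + w1 + d * w2 + b * w3 = 0"
    "c * w0 + d * w1 + w2 + a * w3 = 0" "c * w0 + b * w1 + a * w2 + w3 = 0"
    using rel[OF n(1)] rel[OF n(2)] rel[OF n(3)] rel[OF n(4)] c a b d sym gam_pair_self[OF n(1)]
      gam_pair_self[OF n(2)] gam_pair_self[OF n(3)] gam_pair_self[OF n(4)]
    by (simp_all add: algebra_simps)
  ultimately show ?thesis by (intro gram_singular_concyclic_relation) auto
qed

lemma inscribed_angle_sin_identity:
  fixes x y z c :: real
  assumes x: "x > 1" and y: "y > 1" and c: "c > 1"
    and rel: "(1 - y\<^sup>2 - x\<^sup>2 - z\<^sup>2 + 2 * y * x * z) * (c\<^sup>2 - 1) = 2 * c\<^sup>2 * (y - 1) * (x - 1) * (z - 1)"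
  shows "sqrt (1 - ((x * y - z) / (sqrt (x\<^sup>2 - 1) * sqrt (y\<^sup>2 - 1)))\<^sup>2)
    = 2 * c / sqrt ((x + 1) * (y + 1)) * sqrt ((1 - (c * c - z) / (sqrt (c\<^sup>2 - 1) * sqrt (c\<^sup>2 - 1))) / 2)"
proof -
  define h where "h = (z - 1) / (2 * (c\<^sup>2 - 1))"
  have x2: "x\<^sup>2 - 1 > 0" and y2: "y\<^sup>2 - 1 > 0" and c2: "c\<^sup>2 - 1 > 0"
    using x y c by (simp_all add: one_less_power)
  have "1 - ((x * y - z) / (sqrt (x\<^sup>2 - 1) * sqrt (y\<^sup>2 - 1)))\<^sup>2
      = ((x\<^sup>2 - 1) * (y\<^sup>2 - 1) - (x * y - z)\<^sup>2) / ((x\<^sup>2 - 1) * (y\<^sup>2 - 1))"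
  proof -
    have "((x * y - z) / (sqrt (x\<^sup>2 - 1) * sqrt (y\<^sup>2 - 1)))\<^sup>2 = (x * y - z)\<^sup>2 / ((x\<^sup>2 - 1) * (y\<^sup>2 - 1))"
      using x2 y2 by (simp add: power_divide power_mult_distrib)
    then show ?thesis using x2 y2 by (simp add: diff_divide_distrib)
  qed
  also have "(x\<^sup>2 - 1) * (y\<^sup>2 - 1) - (x * y - z)\<^sup>2 = 1 - y\<^sup>2 - x\<^sup>2 - z\<^sup>2 + 2 * y * x * z"
    by algebra
  also have "\<dots> = 2 * c\<^sup>2 * (y - 1) * (x - 1) * (z - 1) / (c\<^sup>2 - 1)"
    using rel c2 by (simp add: eq_divide_eq)
  also have "(x\<^sup>2 - 1) * (y\<^sup>2 - 1) = (x - 1) * (x + 1) * ((y - 1) * (y + 1))"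
    by (simp add: power2_eq_square algebra_simps)
  also have "2 * c\<^sup>2 * (y - 1) * (x - 1) * (z - 1) / (c\<^sup>2 - 1) / ((x - 1) * (x + 1) * ((y - 1) * (y + 1)))
      = 4 * c\<^sup>2 / ((x + 1) * (y + 1)) * h"
  proof -
    have gen: "\<And>a b e p q Z C :: real. a \<noteq> 0 \<Longrightarrow> b \<noteq> 0 \<Longrightarrow> e \<noteq> 0 \<Longrightarrow>
        2 * C * b * a * Z / e / (a * p * (b * q)) = 4 * C / (p * q) * (Z / (2 * e))"
      by (simp add: field_simps)
    show ?thesis unfolding h_def by (rule gen) (use x y c2 in auto)
  qed
  finally have sin_sq: "1 - ((x * y - z) / (sqrt (x\<^sup>2 - 1) * sqrt (y\<^sup>2 - 1)))\<^sup>2 = 4 * c\<^sup>2 / ((x + 1) * (y + 1)) * h" .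
  have half: "(1 - (c * c - z) / (sqrt (c\<^sup>2 - 1) * sqrt (c\<^sup>2 - 1))) / 2 = h"
    using c2 unfolding h_def by (simp add: field_simps power2_eq_square)
  have root: "sqrt (4 * c\<^sup>2 / ((x + 1) * (y + 1))) = 2 * c / sqrt ((x + 1) * (y + 1))"
    using c by (simp add: real_sqrt_divide real_sqrt_mult)
  show ?thesis unfolding sin_sq half real_sqrt_mult root ..
qed

lemma sin_inscribed_gyroangle:
  fixes Oc A1 A2 A3 B1 B2 B3 :: "'a::real_inner"
  assumes b1: "norm B1 < s"
    and P: "Oc \<in> gyroplane s B1 B2 B3" "A1 \<in> gyroplane s B1 B2 B3"
      "A2 \<in> gyroplane s B1 B2 B3" "A3 \<in> gyroplane s B1 B2 B3"
    and c: "gam_pair s Oc A1 = c" "gam_pair s Oc A2 = c" "gam_pair s Oc A3 = c"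
    and ne: "A1 \<noteq> A2" "A1 \<noteq> A3" "A2 \<noteq> A3"
  shows "sin (gyroangle s A3 A1 A2) =
    2 * c / sqrt ((gam_pair s A1 A3 + 1) * (gam_pair s A2 A3 + 1)) * sin (gyroangle s Oc A1 A2 / 2)"
proof -
  have n: "norm Oc < s" "norm A1 < s" "norm A2 < s" "norm A3 < s"
    using P gyroplane_subset_sball unfolding sball_def by blast+
  have "c > 1" using gam_pair_equidistant_gt_one[OF n(1-3)] c ne by simp
  then have ne_Oc: "Oc \<noteq> A1" "Oc \<noteq> A2"
    using c gam_pair_self[OF n(2)] gam_pair_self[OF n(3)] by auto
  have "sin (gyroangle s A3 A1 A2) = sqrt (1 - ((gam_pair s A1 A3 * gam_pair s A2 A3 - gam_pair s A1 A2)
      / (sqrt ((gam_pair s A1 A3)\<^sup>2 - 1) * sqrt ((gam_pair s A2 A3)\<^sup>2 - 1)))\<^sup>2)"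
    unfolding sin_gyroangle cos_gyroangle[OF n(4,2,3) ne(2,3)[symmetric]] by (simp add: gam_pair_commute)
  also have "\<dots> = 2 * c / sqrt ((gam_pair s A1 A3 + 1) * (gam_pair s A2 A3 + 1))
      * sqrt ((1 - (c * c - gam_pair s A1 A2) / (sqrt (c\<^sup>2 - 1) * sqrt (c\<^sup>2 - 1))) / 2)"
  proof (rule inscribed_angle_sin_identity)
    show "gam_pair s A1 A3 > 1" "gam_pair s A2 A3 > 1"
      using gam_pair_gt_one n ne by auto
    show "(1 - (gam_pair s A2 A3)\<^sup>2 - (gam_pair s A1 A3)\<^sup>2 - (gam_pair s A1 A2)\<^sup>2
        + 2 * gam_pair s A2 A3 * gam_pair s A1 A3 * gam_pair s A1 A2) * (c\<^sup>2 - 1)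
      = 2 * c\<^sup>2 * (gam_pair s A2 A3 - 1) * (gam_pair s A1 A3 - 1) * (gam_pair s A1 A2 - 1)"
      by (rule gyroplane_concyclic_relation[OF b1 P c refl refl refl ne])
  qed fact
  also have "\<dots> = 2 * c / sqrt ((gam_pair s A1 A3 + 1) * (gam_pair s A2 A3 + 1))
      * sin (gyroangle s Oc A1 A2 / 2)"
    unfolding sin_half_eq_sqrt[OF gyroangle_bounds] cos_gyroangle[OF n(1,2,3) ne_Oc] c ..
  finally show ?thesis .
qed

theorem mainTheorem1:
  fixes s R :: real and Oc A1 A2 A3 B1 B2 B3 :: "real ^ 'n"
  assumes "s > 0" and "CARD('n) \<ge> 2"
    and "B1 \<in> sball s" "B2 \<in> sball s" "B3 \<in> sball s"
    and "gyro_bary_indep s B1 B2 B3"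
    and "Oc \<in> gyroplane s B1 B2 B3"
    and "A1 \<in> gyrocircle s (gyroplane s B1 B2 B3) Oc R"
    and "A2 \<in> gyrocircle s (gyroplane s B1 B2 B3) Oc R"
    and "A3 \<in> gyrocircle s (gyroplane s B1 B2 B3) Oc R"
    and "A1 \<noteq> A2" "A1 \<noteq> A3" "A2 \<noteq> A3"
  shows "sin (gyroangle s A3 A1 A2) =
           2 * gamr s R / sqrt ((gam s (eadd s (- A1) A3) + 1) * (gam s (eadd s (- A2) A3) + 1))
           * sin (gyroangle s Oc A1 A2 / 2)"
proof -
  have P: "A1 \<in> gyroplane s B1 B2 B3" "A2 \<in> gyroplane s B1 B2 B3" "A3 \<in> gyroplane s B1 B2 B3"
    and R: "gyrodist s Oc A1 = R" "gyrodist s Oc A2 = R" "gyrodist s Oc A3 = R"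
    using assms(8-10) unfolding gyrocircle_def by auto
  have n: "norm B1 < s" "norm Oc < s" "norm A1 < s" "norm A2 < s" "norm A3 < s"
    using assms(3,7) P gyroplane_subset_sball unfolding sball_def by blast+
  have "gam_pair s Oc A1 = gamr s R" "gam_pair s Oc A2 = gamr s R" "gam_pair s Oc A3 = gamr s R"
    using R gam_eadd_minus n unfolding gyrodist_def gam_eq_gamr_norm by metis+
  then show ?thesis
    unfolding gam_eadd_minus[OF n(3,5)] gam_eadd_minus[OF n(4,5)]
    by (rule sin_inscribed_gyroangle[OF n(1) assms(7) P _ _ _ assms(11-13)])
qed

end
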